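(* Let $F$ be a field of characteristic zero and $A$ a $\#$-superalgebra over $F$. Let $n_1,n_2,n_3,n_4,m$ be positive integers, $\langle n\rangle=(n_1,n_2,n_3,n_4)$, $i_0\in\{1,2,3,4\}$ with $n_{i_0}\ge m^2$, and $Q=\{q_1,\dots,q_{m^2}\}\subseteq\{1,\dots,n_{i_0}\}$ with $|Q|=m^2$. Let $\rho=\rho_1\otimes\cdots\otimes\rho_4$ where $\rho_{i_0}\in FS_Q$ and $\rho_j\in FS_{n_j}$ for $j\ne i_0$, and let $f\in P_{\langle n\rangle}$ be such that $\rho f\not\equiv0$ in $A$. Let $V_{i_0}$ denote the variables of type $i_0$ (i.e. $y_{0,\cdot}$ if $i_0=1$, $z_{0,\cdot}$ if $i_0=2$, $y_{1,\cdot}$ if $i_0=3$, $z_{1,\cdot}$ if $i_0=4$), and $v_{k}$ the variable of type $i_0$ with second index $k$. Then there exist integers $t_1,t_2,t_3,t_4\ge0$, with $t=t_1+t_2+t_3+t_4$, $t_{i_0}\ge m^2$ and $m^2\le t\le 2m^2+1$, and a multilinear $\#$-supermonomial $w$ whose variables are: for each type $j\ne i_0$, the first $t_j$ variables of type $j$; and, for type $i_0$, a set $X_{t_{i_0}}$ of $t_{i_0}$ variables consisting of $v_{q_1},\dots,v_{q_{m^2}}$ together with $t_{i_0}-m^2$ further variables chosen among $\{v_1,\dots,v_{t_{i_0}}\}\setminus\{v_{q_1},\dots,v_{q_{m^2}}\}$; such that $$(Id_1\otimes\cdots\otimes\rho_{i_0}\otimes\cdots\otimes Id_4)\,w\not\equiv0\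 \text{ in } A,$$ where $\rho_{i_0}$ acts by permuting the indices in $Q$ of the variables $v_{q_1},\dots,v_{q_{m^2}}$ and all other factors act trivially.
   Context: All algebras are associative over $F$. A superalgebra is $A=A_0\oplus A_1$; a superinvolution is an $F$-linear $\#$ with $A_i^\#\subseteq A_i$, $(c^\#)^\#=c$, $(ab)^\#=(-1)^{\deg a\deg b}b^\#a^\#$; a graded involution is $F$-linear $\#$ with $A_i^\#\subseteq A_i$, $(c^\#)^\#=c$, $(ab)^\#=b^\#a^\#$; a $\#$-superalgebra carries one of these; $A_i^\pm=\{a\in A_i:a^\#=\pm a\}$. $\mathcal F$ is the free non-unital associative algebra on variables $y_{i,j}$ (symmetric) and $z_{i,j}$ (skew), $i\in\{0,1\}$, $j\ge1$; the variables $y_{0,j}$, $z_{0,j}$, $y_{1,j}$, $z_{1,j}$ are said to be of type 1, 2, 3, 4 respectively; variables with first index $i$ have $\mathbb Z_2$-degree $i$, and $\mathcal F$ carries the induced superinvolution/graded involution. A $\#$-supermonomial is a monomial of $\mathcal F$. $g\equiv0$ in $A$ means $g$ vanishes under all substitutions $y_{0,j}\mapsto A_0^+$, $z_{0,j}\mapsto A_0^-$, $y_{1,j}\mapsto A_1^+$, $z_{1,j}\mapsto A_1^-$. $P_{\langle n\rangle}$ is the span of monomials multilinear in $y_{0,1..n_1},z_{0,1..n_2},y_{1,1..n_3},z_{1,1..n_4}$; $FS_{n_1}\otimes\cdots\otimes FS_{n_4}$ acts on it by permuting second indices of each type separately, and $S_Q$ denotes the permutations of $\{1,\dots,n_{i_0}\}$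 fixing every point outside $Q$. *)

theory Defs
  imports Main HOL.Modules "HOL-Library.Groups_Big_Fun" "HOL-Combinatorics.Permutations"
begin

definition algebra_over :: "('a::field \<Rightarrow> 'b::ring \<Rightarrow> 'b) \<Rightarrow> bool" where
  "algebra_over sc \<longleftrightarrow> module sc \<and>
     (\<forall>c x y. sc c (x * y) = sc c x * y \<and> sc c (x * y) = x * sc c y)"

definition superalgebra :: "('a::field \<Rightarrow> 'b::ring \<Rightarrow> 'b) \<Rightarrow> (nat \<Rightarrow> 'b set) \<Rightarrow> bool" where
  "superalgebra sc G \<longleftrightarrow> algebra_over sc \<and>
     module.subspace sc (G 0) \<and> module.subspace sc (G 1) \<and>
     G 0 \<inter> G 1 = {0} \<and> (\<forall>x. \<exists>a\<in>G 0. \<exists>b\<in>G 1. x = a + b) \<and>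
     (\<forall>i\<in>{0,1}. \<forall>j\<in>{0,1}. \<forall>a\<in>G i. \<forall>b\<in>G j. a * b \<in> G ((i + j) mod 2))"

definition graded_linear_involutive ::
  "('a::field \<Rightarrow> 'b::ring \<Rightarrow> 'b) \<Rightarrow> (nat \<Rightarrow> 'b set) \<Rightarrow> ('b \<Rightarrow> 'b) \<Rightarrow> bool" where
  "graded_linear_involutive sc G sh \<longleftrightarrow>
     (\<forall>x y. sh (x + y) = sh x + sh y) \<and> (\<forall>c x. sh (sc c x) = sc c (sh x)) \<and>
     (\<forall>i\<in>{0,1}. sh ` G i \<subseteq> G i) \<and> (\<forall>c. sh (sh c) = c)"

definition superinvolution ::
  "('a::field \<Rightarrow> 'b::ring \<Rightarrow> 'b) \<Rightarrow> (nat \<Rightarrow> 'b set) \<Rightarrow> ('b \<Rightarrow> 'b) \<Rightarrow> bool" where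
  "superinvolution sc G sh \<longleftrightarrow> graded_linear_involutive sc G sh \<and>
     (\<forall>i\<in>{0,1}. \<forall>j\<in>{0,1}. \<forall>a\<in>G i. \<forall>b\<in>G j.
        sh (a * b) = (if i = 1 \<and> j = 1 then - (sh b * sh a) else sh b * sh a))"

definition graded_involution ::
  "('a::field \<Rightarrow> 'b::ring \<Rightarrow> 'b) \<Rightarrow> (nat \<Rightarrow> 'b set) \<Rightarrow> ('b \<Rightarrow> 'b) \<Rightarrow> bool" where
  "graded_involution sc G sh \<longleftrightarrow> graded_linear_involutive sc G sh \<and>
     (\<forall>a b. sh (a * b) = sh b * sh a)"

definition sharp_superalgebra ::
  "('a::field \<Rightarrow> 'b::ring \<Rightarrow> 'b) \<Rightarrow> (nat \<Rightarrow> 'b set) \<Rightarrow> ('b \<Rightarrow> 'b) \<Rightarrow> bool" where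
  "sharp_superalgebra sc G sh \<longleftrightarrow> superalgebra sc G \<and>
     (superinvolution sc G sh \<or> graded_involution sc G sh)"

text \<open>A variable is a pair (type, index): type 1,2,3,4 stands for
  y_(0,j), z_(0,j), y_(1,j), z_(1,j) respectively; indices start at 1.
  Monomials are (nonempty) words of variables; a polynomial is its coefficient
  function on words (finitely supported in all uses below).\<close>
type_synonym var = "nat \<times> nat"
type_synonym 'a fpoly = "var list \<Rightarrow> 'a"

text \<open>Product of a nonempty word in a non-unital algebra (the free algebra
  is non-unital, so the empty word never occurs).\<close>
fun wprod :: "'b::ring list \<Rightarrow> 'b" where
  "wprod [] = 0"
| "wprod [x] = x"
| "wprod (x # y # xs) = x * wprod (y # xs)"

definition eval_poly :: "('a \<Rightarrow> 'b \<Rightarrow> 'b) \<Rightarrow> 'a::zero fpoly \<Rightarrow> (var \<Rightarrow> 'b::ring) \<Rightarrow> 'b" where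
  "eval_poly sc p s = Sum_any (\<lambda>w. if p w = 0 then 0 else sc (p w) (wprod (map s w)))"

definition sym_part :: "(nat \<Rightarrow> 'b set) \<Rightarrow> ('b \<Rightarrow> 'b) \<Rightarrow> nat \<Rightarrow> 'b set" where
  "sym_part G sh i = {a \<in> G i. sh a = a}"
definition skew_part :: "(nat \<Rightarrow> 'b set) \<Rightarrow> ('b \<Rightarrow> 'b::ab_group_add) \<Rightarrow> nat \<Rightarrow> 'b set" where
  "skew_part G sh i = {a \<in> G i. sh a = - a}"

definition admissible_subst :: "(nat \<Rightarrow> 'b set) \<Rightarrow> ('b \<Rightarrow> 'b::ab_group_add) \<Rightarrow> (var \<Rightarrow> 'b) \<Rightarrow> bool" where
  "admissible_subst G sh s \<longleftrightarrow> (\<forall>j.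
     s (1, j) \<in> sym_part G sh 0 \<and> s (2, j) \<in> skew_part G sh 0 \<and>
     s (3, j) \<in> sym_part G sh 1 \<and> s (4, j) \<in> skew_part G sh 1)"

definition vanishes_in ::
  "('a::field \<Rightarrow> 'b::ring \<Rightarrow> 'b) \<Rightarrow> (nat \<Rightarrow> 'b set) \<Rightarrow> ('b \<Rightarrow> 'b) \<Rightarrow> 'a fpoly \<Rightarrow> bool" where
  "vanishes_in sc G sh p \<longleftrightarrow> (\<forall>s. admissible_subst G sh s \<longrightarrow> eval_poly sc p s = 0)"

definition monom_poly :: "var list \<Rightarrow> 'a::{zero,one} fpoly" where
  "monom_poly w = (\<lambda>u. if u = w then 1 else 0)"

definition multilinear_in :: "var set \<Rightarrow> var list \<Rightarrow> bool" where
  "multilinear_in S w \<longleftrightarrow> distinct w \<and> set w = S"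

definition vars_n :: "(nat \<Rightarrow> nat) \<Rightarrow> var set" where
  "vars_n n = {(i, j). i \<in> {1..4} \<and> j \<in> {1..n i}}"

definition in_P :: "(nat \<Rightarrow> nat) \<Rightarrow> 'a::zero fpoly \<Rightarrow> bool" where
  "in_P n f \<longleftrightarrow> (\<forall>w. f w \<noteq> 0 \<longrightarrow> multilinear_in (vars_n n) w)"

text \<open>Elements of a group algebra FS: coefficient functions on permutations
  (maps nat \<Rightarrow> nat); the support is constrained separately.\<close>
type_synonym 'a galg = "(nat \<Rightarrow> nat) \<Rightarrow> 'a"

definition galg_unit :: "'a::{zero,one} galg" where
  "galg_unit = (\<lambda>\<sigma>. if \<sigma> = id then 1 else 0)"

definition rename_type :: "nat \<Rightarrow> (nat \<Rightarrow> nat) \<Rightarrow> var \<Rightarrow> var" where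
  "rename_type i \<sigma> v = (if fst v = i then (fst v, \<sigma> (snd v)) else v)"

text \<open>Linear action of r in FS on polynomials, permuting the indices of type-i variables:
  sigma sends the monomial w to map (rename_type i sigma) w (a left action).\<close>
definition act_type :: "nat \<Rightarrow> 'a::comm_ring_1 galg \<Rightarrow> 'a fpoly \<Rightarrow> 'a fpoly" where
  "act_type i r p = (\<lambda>u. Sum_any (\<lambda>\<sigma>. r \<sigma> * p (map (rename_type i (inv \<sigma>)) u)))"

definition tensor_act :: "(nat \<Rightarrow> 'a::comm_ring_1 galg) \<Rightarrow> 'a fpoly \<Rightarrow> 'a fpoly" where
  "tensor_act \<rho> f = act_type 1 (\<rho> 1) (act_type 2 (\<rho> 2) (act_type 3 (\<rho> 3) (act_type 4 (\<rho> 4) f)))"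

end

theory Submission
  imports Defs
begin

text \<open>
  The factors of \<open>\<rho>\<close> act on different types of variables and commute, so if \<open>\<rho> f\<close> does
  not vanish then neither does \<open>\<rho>\<^sub>i\<^sub>0 f\<close>, and hence neither does \<open>\<rho>\<^sub>i\<^sub>0 w\<close> for some
  multilinear monomial \<open>w\<close> of \<open>f\<close>. Fix a substitution on which \<open>\<rho>\<^sub>i\<^sub>0 w\<close> is non-zero and
  replace every variable of \<open>w\<close> other than the \<open>m\<^sup>2\<close> variables \<open>v\<^sub>q\<close>, \<open>q \<in> Q\<close>, by its value.
  Two adjacent constants may be replaced by their product, which is homogeneous and hence the sum
  of a symmetric and a skew element of the same degree; by linearity one of the two resulting words
  still has a non-zero value. Repeating this until no two constants are adjacent leaves a word of
  length at most \<open>2 m\<^sup>2 + 1\<close>. Renaming its constants into fresh variables of their types gives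
  the monomial sought, with the constants as the non-vanishing substitution.
\<close>

section \<open>The action of the group algebra\<close>

definition in_group_algebra :: "'a::zero galg \<Rightarrow> nat set \<Rightarrow> bool" where
  "in_group_algebra r X \<longleftrightarrow> (\<forall>\<sigma>. r \<sigma> \<noteq> 0 \<longrightarrow> \<sigma> permutes X)"

lemma in_group_algebra_mono: "in_group_algebra r Y \<Longrightarrow> Y \<subseteq> X \<Longrightarrow> in_group_algebra r X"
  by (auto simp: in_group_algebra_def intro: permutes_subset)

lemma in_group_algebra_galg_unit [simp]: "in_group_algebra galg_unit X"
  by (simp add: in_group_algebra_def galg_unit_def)

lemma rename_type_id [simp]: "rename_type i id = id"
  by (auto simp: rename_type_def)

lemma rename_type_commute:
  "i \<noteq> j \<Longrightarrow> rename_type i \<sigma> (rename_type j \<tau> v) = rename_type j \<tau> (rename_type i \<sigma> v)"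
  by (auto simp: rename_type_def)

lemma rename_type_inv_cancel:
  assumes "bij \<sigma>"
  shows "rename_type i \<sigma> (rename_type i (inv \<sigma>) v) = v"
    and "rename_type i (inv \<sigma>) (rename_type i \<sigma> v) = v"
  using assms by (auto simp: rename_type_def bij_is_surj bij_is_inj surj_f_inv_f)

lemma map_rename_type_inv_cancel:
  assumes "bij \<sigma>"
  shows "map (rename_type i \<sigma>) (map (rename_type i (inv \<sigma>)) u) = u"
    and "map (rename_type i (inv \<sigma>)) (map (rename_type i \<sigma>) u) = u"
  by (simp_all add: map_idI rename_type_inv_cancel[OF assms])

lemma act_type_eq_sum:
  assumes "finite X" "in_group_algebra r X"
  shows "act_type i r p u = (\<Sum>\<sigma> | \<sigma> permutes X. r \<sigma> * p (map (rename_type i (inv \<sigma>)) u))"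
  unfolding act_type_def
proof (rule Sum_any.expand_superset)
  show "finite {\<sigma>. \<sigma> permutes X}"
    using assms(1) by (rule finite_permutations)
  show "{\<sigma>. r \<sigma> * p (map (rename_type i (inv \<sigma>)) u) \<noteq> 0} \<subseteq> {\<sigma>. \<sigma> permutes X}"
    using assms(2) by (auto simp: in_group_algebra_def) (metis mult_zero_left)
qed

lemma act_type_galg_unit [simp]: "act_type i galg_unit p = p"
proof
  fix u
  have "act_type i galg_unit p u = (\<Sum>\<sigma>\<in>{id}. galg_unit \<sigma> * p (map (rename_type i (inv \<sigma>)) u))"
    unfolding act_type_def by (rule Sum_any.expand_superset) (auto simp: galg_unit_def)
  then show "act_type i galg_unit p u = p u"
    by (simp add: galg_unit_def)
qed

lemma act_type_commute:
  assumes "i \<noteq> j" "finite X" "in_group_algebra r X" "in_group_algebra r' X"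
  shows "act_type i r (act_type j r' p) = act_type j r' (act_type i r p)"
proof
  fix u
  let ?P = "{\<sigma>. \<sigma> permutes X}"
  have swap: "rename_type j (inv \<tau>) \<circ> rename_type i (inv \<sigma>) =
        rename_type i (inv \<sigma>) \<circ> rename_type j (inv \<tau>)" for \<sigma> \<tau>
    using rename_type_commute[OF assms(1)] by auto
  have "act_type i r (act_type j r' p) u =
      (\<Sum>\<sigma>\<in>?P. \<Sum>\<tau>\<in>?P. r \<sigma> * r' \<tau> * p (map (rename_type j (inv \<tau>)) (map (rename_type i (inv \<sigma>)) u)))"
    using assms by (simp add: act_type_eq_sum sum_distrib_left mult.assoc)
  also have "\<dots> = (\<Sum>\<tau>\<in>?P. \<Sum>\<sigma>\<in>?P. r' \<tau> * r \<sigma> * p (map (rename_type i (inv \<sigma>)) (map (rename_type j (inv \<tau>)) u)))"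
    by (subst sum.swap) (simp add: swap ac_simps)
  also have "\<dots> = act_type j r' (act_type i r p) u"
    using assms by (simp add: act_type_eq_sum sum_distrib_left mult.assoc)
  finally show "act_type i r (act_type j r' p) u = act_type j r' (act_type i r p) u" .
qed

lemma support_act_type_subset:
  assumes "finite X" "in_group_algebra r X"
  shows "{u. act_type i r p u \<noteq> 0} \<subseteq> (\<Union>\<sigma>\<in>{\<sigma>. \<sigma> permutes X}. map (rename_type i \<sigma>) ` {w. p w \<noteq> 0})"
proof
  fix u assume "u \<in> {u. act_type i r p u \<noteq> 0}"
  then have "(\<Sum>\<sigma> | \<sigma> permutes X. r \<sigma> * p (map (rename_type i (inv \<sigma>)) u)) \<noteq> 0"
    using assms by (simp add: act_type_eq_sum)
  then obtain \<sigma> where \<sigma>: "\<sigma> permutes X" and "r \<sigma> * p (map (rename_type i (inv \<sigma>)) u) \<noteq> 0"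
    by (auto elim: sum.not_neutral_contains_not_neutral)
  then have "map (rename_type i (inv \<sigma>)) u \<in> {w. p w \<noteq> 0}"
    by auto
  moreover have "u = map (rename_type i \<sigma>) (map (rename_type i (inv \<sigma>)) u)"
    using map_rename_type_inv_cancel(1)[OF permutes_bij[OF \<sigma>]] by simp
  ultimately show "u \<in> (\<Union>\<sigma>\<in>{\<sigma>. \<sigma> permutes X}. map (rename_type i \<sigma>) ` {w. p w \<noteq> 0})"
    using \<sigma> by blast
qed

lemma finite_support_act_type:
  assumes "finite X" "in_group_algebra r X" "finite {w. p w \<noteq> 0}"
  shows "finite {u. act_type i r p u \<noteq> 0}"
  by (rule finite_subset[OF support_act_type_subset[OF assms(1,2)]])
    (use assms in \<open>simp add: finite_permutations\<close>)

lemma eval_poly_eq_sum: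
  assumes "module sc" "finite W" "{w. p w \<noteq> 0} \<subseteq> W"
  shows "eval_poly sc p s = (\<Sum>w\<in>W. sc (p w) (wprod (map s w)))"
proof -
  interpret module sc by (rule assms(1))
  have "eval_poly sc p s = (\<Sum>w\<in>W. if p w = 0 then 0 else sc (p w) (wprod (map s w)))"
    unfolding eval_poly_def by (rule Sum_any.expand_superset) (use assms in auto)
  also have "\<dots> = (\<Sum>w\<in>W. sc (p w) (wprod (map s w)))"
    by (rule sum.cong) simp_all
  finally show ?thesis .
qed

lemma eval_poly_act_type:
  fixes sc :: "'a::comm_ring_1 \<Rightarrow> 'b::ring \<Rightarrow> 'b"
  assumes "module sc" "finite X" "in_group_algebra r X" "finite {w. p w \<noteq> 0}"
  shows "eval_poly sc (act_type i r p) s =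
    (\<Sum>\<sigma> | \<sigma> permutes X. sc (r \<sigma>) (eval_poly sc p (s \<circ> rename_type i \<sigma>)))"
proof -
  interpret module sc by (rule assms(1))
  let ?P = "{\<sigma>. \<sigma> permutes X}" and ?ren = "\<lambda>\<sigma>. map (rename_type i \<sigma>)"
  define U where "U = (\<Union>\<sigma>\<in>?P. ?ren \<sigma> ` {w. p w \<noteq> 0})"
  have U: "finite U"
    using assms(2,4) by (simp add: U_def finite_permutations)
  have eval_renamed: "eval_poly sc p (s \<circ> rename_type i \<sigma>) =
      (\<Sum>u\<in>U. sc (p (?ren (inv \<sigma>) u)) (wprod (map s u)))" if \<sigma>: "\<sigma> permutes X" for \<sigma>
  proof -
    note cancel = map_rename_type_inv_cancel[OF permutes_bij[OF \<sigma>]]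
    have "{w. p w \<noteq> 0} \<subseteq> ?ren (inv \<sigma>) ` U"
    proof
      fix w assume "w \<in> {w. p w \<noteq> 0}"
      then have "?ren \<sigma> w \<in> U"
        using \<sigma> by (auto simp: U_def)
      then show "w \<in> ?ren (inv \<sigma>) ` U"
        using cancel(2)[where u = w] by (metis image_eqI)
    qed
    moreover have inj: "inj_on (?ren (inv \<sigma>)) U"
      by (rule inj_on_inverseI[where g = "?ren \<sigma>"]) (rule cancel(1))
    ultimately have "eval_poly sc p (s \<circ> rename_type i \<sigma>) =
        (\<Sum>w\<in>?ren (inv \<sigma>) ` U. sc (p w) (wprod (map (s \<circ> rename_type i \<sigma>) w)))"
      using U by (intro eval_poly_eq_sum assms(1)) auto
    also have "\<dots> = (\<Sum>u\<in>U. sc (p (?ren (inv \<sigma>) u)) (wprod (map s u)))"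
    proof (rule sum.reindex_cong[OF inj refl])
      fix u
      have "map (s \<circ> rename_type i \<sigma>) (?ren (inv \<sigma>) u) = map s (?ren \<sigma> (?ren (inv \<sigma>) u))"
        by simp
      then show "sc (p (?ren (inv \<sigma>) u)) (wprod (map (s \<circ> rename_type i \<sigma>) (?ren (inv \<sigma>) u))) =
          sc (p (?ren (inv \<sigma>) u)) (wprod (map s u))"
        by (simp only: cancel(1))
    qed
    finally show ?thesis .
  qed
  have "eval_poly sc (act_type i r p) s = (\<Sum>u\<in>U. sc (act_type i r p u) (wprod (map s u)))"
    using support_act_type_subset[OF assms(2,3)] U by (intro eval_poly_eq_sum assms(1)) (auto simp: U_def)
  also have "\<dots> = (\<Sum>u\<in>U. \<Sum>\<sigma>\<in>?P. sc (r \<sigma>) (sc (p (?ren (inv \<sigma>) u)) (wprod (map s u))))"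
    using assms(2,3) by (simp add: act_type_eq_sum scale_sum_left)
  also have "\<dots> = (\<Sum>\<sigma>\<in>?P. sc (r \<sigma>) (\<Sum>u\<in>U. sc (p (?ren (inv \<sigma>) u)) (wprod (map s u))))"
    by (subst sum.swap) (simp add: scale_sum_right)
  also have "\<dots> = (\<Sum>\<sigma>\<in>?P. sc (r \<sigma>) (eval_poly sc p (s \<circ> rename_type i \<sigma>)))"
    by (simp add: eval_renamed)
  finally show ?thesis .
qed

lemma admissible_subst_rename_type:
  "admissible_subst G sh s \<Longrightarrow> admissible_subst G sh (s \<circ> rename_type i \<sigma>)"
  by (auto simp: admissible_subst_def rename_type_def)

lemma not_vanishes_if_not_vanishes_act_type:
  fixes sc :: "'a::field \<Rightarrow> 'b::ring \<Rightarrow> 'b"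
  assumes "module sc" "finite X" "in_group_algebra r X" "finite {w. p w \<noteq> 0}"
    and "\<not> vanishes_in sc G sh (act_type i r p)"
  shows "\<not> vanishes_in sc G sh p"
proof -
  interpret module sc by (rule assms(1))
  obtain s where s: "admissible_subst G sh s" "eval_poly sc (act_type i r p) s \<noteq> 0"
    using assms(5) by (auto simp: vanishes_in_def)
  then have "(\<Sum>\<sigma> | \<sigma> permutes X. sc (r \<sigma>) (eval_poly sc p (s \<circ> rename_type i \<sigma>))) \<noteq> 0"
    by (simp add: eval_poly_act_type[OF assms(1-4)])
  then obtain \<sigma> where "sc (r \<sigma>) (eval_poly sc p (s \<circ> rename_type i \<sigma>)) \<noteq> 0"
    by (rule sum.not_neutral_contains_not_neutral)
  then have "eval_poly sc p (s \<circ> rename_type i \<sigma>) \<noteq> 0"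
    by auto
  then show ?thesis
    using admissible_subst_rename_type[OF s(1)] by (auto simp: vanishes_in_def)
qed

lemma finite_support_monom_poly: "finite {u. monom_poly w u \<noteq> 0}"
  by (simp add: monom_poly_def)

lemma eval_act_type_monom_poly:
  fixes sc :: "'a::comm_ring_1 \<Rightarrow> 'b::ring \<Rightarrow> 'b"
  assumes "module sc" "finite X" "in_group_algebra r X"
  shows "eval_poly sc (act_type i r (monom_poly w)) s =
    (\<Sum>\<sigma> | \<sigma> permutes X. sc (r \<sigma>) (wprod (map (s \<circ> rename_type i \<sigma>) w)))"
proof -
  have "eval_poly sc (monom_poly w) s' = wprod (map s' w)" for s'
    by (subst eval_poly_eq_sum[OF assms(1), of "{w}"]) (auto simp: monom_poly_def module.scale_one[OF assms(1)])
  then show ?thesis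
    by (simp add: eval_poly_act_type[OF assms finite_support_monom_poly])
qed

lemma exists_monomial_not_vanishes_act_type:
  fixes sc :: "'a::field \<Rightarrow> 'b::ring \<Rightarrow> 'b"
  assumes "module sc" "finite X" "in_group_algebra r X" "finite {w. p w \<noteq> 0}"
    and "\<not> vanishes_in sc G sh (act_type i r p)"
  shows "\<exists>w. p w \<noteq> 0 \<and> \<not> vanishes_in sc G sh (act_type i r (monom_poly w))"
proof -
  interpret module sc by (rule assms(1))
  let ?W = "{w. p w \<noteq> 0}" and ?P = "{\<sigma>. \<sigma> permutes X}"
  obtain s where s: "admissible_subst G sh s" "eval_poly sc (act_type i r p) s \<noteq> 0"
    using assms(5) by (auto simp: vanishes_in_def)
  have "eval_poly sc (act_type i r p) s =
      (\<Sum>\<sigma>\<in>?P. sc (r \<sigma>) (\<Sum>w\<in>?W. sc (p w) (wprod (map (s \<circ> rename_type i \<sigma>) w))))"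
    using assms(1-4) by (simp add: eval_poly_act_type eval_poly_eq_sum)
  also have "\<dots> = (\<Sum>w\<in>?W. \<Sum>\<sigma>\<in>?P. sc (p w) (sc (r \<sigma>) (wprod (map (s \<circ> rename_type i \<sigma>) w))))"
    by (subst sum.swap) (simp add: scale_sum_right mult.commute)
  also have "\<dots> = (\<Sum>w\<in>?W. sc (p w) (eval_poly sc (act_type i r (monom_poly w)) s))"
    by (simp add: eval_act_type_monom_poly[OF assms(1-3)] scale_sum_right)
  finally have "(\<Sum>w\<in>?W. sc (p w) (eval_poly sc (act_type i r (monom_poly w)) s)) \<noteq> 0"
    using s(2) by simp
  then obtain w where "w \<in> ?W" "sc (p w) (eval_poly sc (act_type i r (monom_poly w)) s) \<noteq> 0"
    by (rule sum.not_neutral_contains_not_neutral)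
  then have "p w \<noteq> 0" "eval_poly sc (act_type i r (monom_poly w)) s \<noteq> 0"
    by auto
  then show ?thesis
    using s(1) by (auto simp: vanishes_in_def)
qed

lemma tensor_act_eq_innermost_act_type:
  assumes "finite X" "\<forall>j\<in>{1..4}. in_group_algebra (\<rho> j) X" "i \<in> {1..4}"
  shows "tensor_act \<rho> p = tensor_act (\<rho>(i := galg_unit)) (act_type i (\<rho> i) p)"
proof -
  have commute: "act_type j (\<rho> j) (act_type k (\<rho> k) q) = act_type k (\<rho> k) (act_type j (\<rho> j) q)"
    if "j \<in> {1..4}" "k \<in> {1..4}" "j \<noteq> k" for j k q
    using that assms(1,2) by (intro act_type_commute) auto
  have c12: "act_type 1 (\<rho> 1) (act_type 2 (\<rho> 2) q) = act_type 2 (\<rho> 2) (act_type 1 (\<rho> 1) q)"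
    and c13: "act_type 1 (\<rho> 1) (act_type 3 (\<rho> 3) q) = act_type 3 (\<rho> 3) (act_type 1 (\<rho> 1) q)"
    and c14: "act_type 1 (\<rho> 1) (act_type 4 (\<rho> 4) q) = act_type 4 (\<rho> 4) (act_type 1 (\<rho> 1) q)"
    and c23: "act_type 2 (\<rho> 2) (act_type 3 (\<rho> 3) q) = act_type 3 (\<rho> 3) (act_type 2 (\<rho> 2) q)"
    and c24: "act_type 2 (\<rho> 2) (act_type 4 (\<rho> 4) q) = act_type 4 (\<rho> 4) (act_type 2 (\<rho> 2) q)"
    and c34: "act_type 3 (\<rho> 3) (act_type 4 (\<rho> 4) q) = act_type 4 (\<rho> 4) (act_type 3 (\<rho> 3) q)"
    for q by (rule commute; simp)+
  from assms(3) consider "i = 1" | "i = 2" | "i = 3" | "i = 4"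
    by fastforce
  then show ?thesis
  proof cases
    case 1
    show ?thesis
      unfolding 1 tensor_act_def c12 c13 c14 by simp
  next
    case 2
    show ?thesis
      unfolding 2 tensor_act_def c23 c24 by simp
  next
    case 3
    show ?thesis
      unfolding 3 tensor_act_def c34 by simp
  next
    case 4
    show ?thesis
      unfolding 4 tensor_act_def by simp
  qed
qed

lemma tensor_act_galg_unit [simp]: "tensor_act (\<lambda>_. galg_unit) p = p"
  by (simp add: tensor_act_def)

lemma not_vanishes_if_not_vanishes_tensor_act:
  fixes sc :: "'a::field \<Rightarrow> 'b::ring \<Rightarrow> 'b"
  assumes "module sc" "finite X" "\<forall>j\<in>{1..4}. in_group_algebra (\<rho> j) X" "finite {w. p w \<noteq> 0}"
    and "\<not> vanishes_in sc G sh (tensor_act \<rho> p)"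
  shows "\<not> vanishes_in sc G sh p"
proof -
  have \<rho>: "in_group_algebra (\<rho> 1) X" "in_group_algebra (\<rho> 2) X"
    "in_group_algebra (\<rho> 3) X" "in_group_algebra (\<rho> 4) X"
    using assms(3) by auto
  note fin = finite_support_act_type[OF assms(2)] and peel = not_vanishes_if_not_vanishes_act_type[OF assms(1,2)]
  have f4: "finite {w. act_type 4 (\<rho> 4) p w \<noteq> 0}"
    using \<rho>(4) assms(4) by (rule fin)
  have f3: "finite {w. act_type 3 (\<rho> 3) (act_type 4 (\<rho> 4) p) w \<noteq> 0}"
    using \<rho>(3) f4 by (rule fin)
  have f2: "finite {w. act_type 2 (\<rho> 2) (act_type 3 (\<rho> 3) (act_type 4 (\<rho> 4) p)) w \<noteq> 0}"
    using \<rho>(2) f3 by (rule fin)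
  from assms(5) have "\<not> vanishes_in sc G sh (act_type 2 (\<rho> 2) (act_type 3 (\<rho> 3) (act_type 4 (\<rho> 4) p)))"
    unfolding tensor_act_def by (rule peel[OF \<rho>(1) f2])
  then have "\<not> vanishes_in sc G sh (act_type 3 (\<rho> 3) (act_type 4 (\<rho> 4) p))"
    by (rule peel[OF \<rho>(2) f3])
  then have "\<not> vanishes_in sc G sh (act_type 4 (\<rho> 4) p)"
    by (rule peel[OF \<rho>(3) f4])
  then show ?thesis
    by (rule peel[OF \<rho>(4) assms(4)])
qed

lemma not_vanishes_act_type_if_not_vanishes_tensor_act:
  fixes sc :: "'a::field \<Rightarrow> 'b::ring \<Rightarrow> 'b"
  assumes "module sc" "\<forall>j\<in>{1..4}. finite (Y j) \<and> in_group_algebra (\<rho> j) (Y j)" "i \<in> {1..4}"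
    and "finite {w. p w \<noteq> 0}" "\<not> vanishes_in sc G sh (tensor_act \<rho> p)"
  shows "\<not> vanishes_in sc G sh (act_type i (\<rho> i) p)"
proof -
  define X where "X = (\<Union>j\<in>{1..4}. Y j)"
  have X: "finite X" "\<forall>j\<in>{1..4}. in_group_algebra (\<rho> j) X"
    using assms(2) by (auto simp: X_def intro: in_group_algebra_mono)
  show ?thesis
  proof (rule not_vanishes_if_not_vanishes_tensor_act[OF assms(1) X(1)])
    show "\<forall>j\<in>{1..4}. in_group_algebra ((\<rho>(i := galg_unit)) j) X"
      using X(2) by simp
    show "finite {w. act_type i (\<rho> i) p w \<noteq> 0}"
      using X assms(3,4) by (intro finite_support_act_type) auto
    show "\<not> vanishes_in sc G sh (tensor_act (\<rho>(i := galg_unit)) (act_type i (\<rho> i) p))"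
      using assms(5) tensor_act_eq_innermost_act_type[OF X assms(3)] by simp
  qed
qed

lemma tensor_act_single:
  assumes "finite X" "in_group_algebra r X" "i \<in> {1..4}"
  shows "tensor_act (\<lambda>j. if j = i then r else galg_unit) p = act_type i r p"
proof -
  let ?\<rho> = "\<lambda>j. if j = i then r else galg_unit"
  have "?\<rho>(i := galg_unit) = (\<lambda>_. galg_unit)"
    by auto
  then show ?thesis
    using tensor_act_eq_innermost_act_type[OF assms(1) _ assms(3), of ?\<rho> p] assms(2) by simp
qed

section \<open>Symmetric and skew homogeneous parts\<close>

definition type_part :: "(nat \<Rightarrow> 'b set) \<Rightarrow> ('b \<Rightarrow> 'b) \<Rightarrow> nat \<Rightarrow> 'b::ab_group_add set" where
  "type_part G sh j =
    (if j = 1 then sym_part G sh 0 else if j = 2 then skew_part G sh 0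
     else if j = 3 then sym_part G sh 1 else skew_part G sh 1)"

lemma admissible_subst_iff_type_part:
  "admissible_subst G sh s \<longleftrightarrow> (\<forall>j\<in>{1..4}. \<forall>k. s (j, k) \<in> type_part G sh j)"
proof -
  have "{1..4::nat} = {1, 2, 3, 4}"
    by auto
  then show ?thesis
    by (auto simp: admissible_subst_def type_part_def)
qed

lemma type_part_subset: "type_part G sh j \<subseteq> G (if j = 1 \<or> j = 2 then 0 else 1)"
  by (auto simp: type_part_def sym_part_def skew_part_def)

lemma superalgebra_module: "superalgebra sc G \<Longrightarrow> module sc"
  by (simp add: superalgebra_def algebra_over_def)

lemma sym_skew_decomposition:
  fixes sc :: "'a::field_char_0 \<Rightarrow> 'b::ring \<Rightarrow> 'b"
  assumes "superalgebra sc G" "graded_linear_involutive sc G sh" "d \<in> {0, 1}" "x \<in> G d"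
  shows "\<exists>a c. x = a + c \<and> a \<in> sym_part G sh d \<and> c \<in> skew_part G sh d"
proof -
  interpret module sc
    using assms(1) by (rule superalgebra_module)
  have G: "module.subspace sc (G d)"
    using assms(1,3) by (auto simp: superalgebra_def)
  have sh_add: "sh (x + y) = sh x + sh y" and sh_scale: "sh (sc c x) = sc c (sh x)"
    and sh_sh: "sh (sh x) = x" and sh_G: "sh ` G d \<subseteq> G d" for x y c
    using assms(2,3) by (auto simp: graded_linear_involutive_def)
  interpret sh: additive sh
    by standard (rule sh_add)
  define a where "a = sc (1/2) (x + sh x)"
  define c where "c = sc (1/2) (x - sh x)"
  have "a + c = sc (1/2) (x + x)"
    by (simp add: a_def c_def scale_right_distrib[symmetric])
  also have "x + x = sc 2 x"
    using scale_left_distrib[of 1 1 x] by simp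
  finally have "x = a + c"
    by simp
  moreover have "sh x \<in> G d"
    using sh_G assms(4) by blast
  then have "a \<in> G d" "c \<in> G d"
    unfolding a_def c_def using G assms(4) subspace_add subspace_diff subspace_scale by blast+
  moreover have "sh a = a" "sh c = - c"
    by (simp_all add: a_def c_def sh_scale sh_add sh_sh sh.diff add.commute scale_right_diff_distrib)
  ultimately show ?thesis
    by (auto simp: sym_part_def skew_part_def)
qed

lemma type_part_mult_decomposition:
  fixes sc :: "'a::field_char_0 \<Rightarrow> 'b::ring \<Rightarrow> 'b"
  assumes "superalgebra sc G" "graded_linear_involutive sc G sh"
    and "j \<in> {1..4}" "j' \<in> {1..4}" "b \<in> type_part G sh j" "b' \<in> type_part G sh j'"
  shows "\<exists>ja a jc c. (ja \<in> {1..4} \<and> a \<in> type_part G sh ja) \<and> (jc \<in> {1..4} \<and> c \<in> type_part G sh jc)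
    \<and> b * b' = a + c"
proof -
  define deg :: "nat \<Rightarrow> nat" where "deg j = (if j = 1 \<or> j = 2 then 0 else 1)" for j
  define d where "d = (deg j + deg j') mod 2"
  have d: "d \<in> {0, 1}"
    by (auto simp: d_def)
  have "b \<in> G (deg j)" "b' \<in> G (deg j')"
    using assms(5,6) type_part_subset unfolding deg_def by blast+
  then have "b * b' \<in> G d"
    using assms(1) by (auto simp: superalgebra_def d_def deg_def)
  then obtain a c where "b * b' = a + c" "a \<in> sym_part G sh d" "c \<in> skew_part G sh d"
    using sym_skew_decomposition[OF assms(1,2) d] by blast
  moreover have "a \<in> type_part G sh (2 * d + 1)" "c \<in> type_part G sh (2 * d + 2)"
    using calculation(2,3) d by (auto simp: type_part_def)
  moreover have "2 * d + 1 \<in> {1..4}" "2 * d + 2 \<in> {1..4}"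
    using d by auto
  ultimately show ?thesis
    by blast
qed

section \<open>Words with constants\<close>

lemma wprod_Cons: "xs \<noteq> [] \<Longrightarrow> wprod (x # xs) = x * wprod xs"
  by (cases xs) auto

lemma wprod_append_mult_adjacent: "wprod (xs @ x # y # ys) = wprod (xs @ (x * y) # ys)"
  by (induction xs) (auto simp: wprod_Cons mult.assoc intro: list.exhaust[of ys])

lemma wprod_append_add: "wprod (xs @ (x + y) # ys) = wprod (xs @ x # ys) + wprod (xs @ y # ys)"
  by (induction xs) (auto simp: wprod_Cons distrib_left distrib_right intro: list.exhaust[of ys])

text \<open>
  An \<open>'b entry list\<close> is a word in which the variables \<open>(i, q)\<close> moved by the group algebra
  are kept as \<open>Qvar q\<close> and every other letter is a constant \<open>Const j b\<close> of type \<open>j\<close>.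
\<close>

datatype 'b entry = Qvar nat | Const nat 'b

fun entry_val :: "(var \<Rightarrow> 'b) \<Rightarrow> nat \<Rightarrow> (nat \<Rightarrow> nat) \<Rightarrow> 'b entry \<Rightarrow> 'b" where
  "entry_val s i \<sigma> (Qvar q) = s (i, \<sigma> q)"
| "entry_val s i \<sigma> (Const j b) = b"

fun no_adjacent_consts :: "'b entry list \<Rightarrow> bool" where
  "no_adjacent_consts (Const j b # Const j' b' # xs) = False"
| "no_adjacent_consts (x # xs) = no_adjacent_consts xs"
| "no_adjacent_consts [] = True"

lemma length_le_if_no_adjacent_consts:
  assumes "no_adjacent_consts xs"
  shows "length xs \<le> 2 * length [q. Qvar q \<leftarrow> xs] + 1"
proof -
  \<comment> \<open>a word starting with a variable even has at most \<open>2\<close> letters per variable\<close>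
  have "length xs + (case xs of Qvar q # _ \<Rightarrow> 1 | _ \<Rightarrow> 0) \<le> 2 * length [q. Qvar q \<leftarrow> xs] + 1"
    using assms by (induction xs rule: no_adjacent_consts.induct) (auto split: entry.splits list.splits)
  then show ?thesis
    by simp
qed

lemma adjacent_consts_if_not_no_adjacent_consts:
  "\<not> no_adjacent_consts xs \<Longrightarrow> \<exists>ys j b j' b' zs. xs = ys @ Const j b # Const j' b' # zs"
proof (induction xs)
  case (Cons x xs)
  show ?case
  proof (cases "\<exists>j b j' b' zs. x # xs = Const j b # Const j' b' # zs")
    case True
    then show ?thesis
      by (metis append_Nil)
  next
    case False
    then have "\<not> no_adjacent_consts xs"
      using Cons.prems by (cases "x # xs" rule: no_adjacent_consts.cases) auto
    then obtain ys j b j' b' zs where "xs = ys @ Const j b # Const j' b' # zs"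
      using Cons.IH by blast
    then show ?thesis
      by (metis append_Cons)
  qed
qed simp

lemma exists_no_adjacent_consts:
  fixes \<Phi> :: "'b::{times,plus} entry list \<Rightarrow> 'c::monoid_add"
  assumes merge: "\<And>ys j b j' b' zs j''.
      \<Phi> (ys @ Const j b # Const j' b' # zs) = \<Phi> (ys @ Const j'' (b * b') # zs)"
    and split: "\<And>ys j a c zs ja jc.
      \<Phi> (ys @ Const j (a + c) # zs) = \<Phi> (ys @ Const ja a # zs) + \<Phi> (ys @ Const jc c # zs)"
    and decompose: "\<And>j b j' b'. P (Const j b) \<Longrightarrow> P (Const j' b') \<Longrightarrow>
      \<exists>ja a jc c. P (Const ja a) \<and> P (Const jc c) \<and> b * b' = a + c"
    and "\<forall>x\<in>set xs. P x" "\<Phi> xs \<noteq> 0"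
  shows "\<exists>xs'. (\<forall>x\<in>set xs'. P x) \<and> [q. Qvar q \<leftarrow> xs'] = [q. Qvar q \<leftarrow> xs] \<and> \<Phi> xs' \<noteq> 0 \<and>
    no_adjacent_consts xs'"
  using assms(4,5)
proof (induction xs rule: length_induct)
  case (1 xs)
  show ?case
  proof (cases "no_adjacent_consts xs")
    case True
    with "1.prems" show ?thesis
      by blast
  next
    case False
    then obtain ys j b j' b' zs where xs: "xs = ys @ Const j b # Const j' b' # zs"
      using adjacent_consts_if_not_no_adjacent_consts by blast
    have "P (Const j b)" "P (Const j' b')"
      using "1.prems"(1) xs by auto
    then obtain ja a jc c where ac: "P (Const ja a)" "P (Const jc c)" "b * b' = a + c"
      using decompose by blast
    have "\<Phi> xs = \<Phi> (ys @ Const ja a # zs) + \<Phi> (ys @ Const jc c # zs)"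
      unfolding xs merge[where j'' = ja] ac(3) by (rule split)
    then have "\<Phi> (ys @ Const ja a # zs) \<noteq> 0 \<or> \<Phi> (ys @ Const jc c # zs) \<noteq> 0"
      using "1.prems"(2) by auto
    then obtain x where x: "x \<in> {Const ja a, Const jc c}" "\<Phi> (ys @ x # zs) \<noteq> 0"
      by blast
    have "length (ys @ x # zs) < length xs" "\<forall>y\<in>set (ys @ x # zs). P y"
      using "1.prems"(1) x(1) ac(1,2) xs by auto
    then obtain xs' where "\<forall>x\<in>set xs'. P x" "[q. Qvar q \<leftarrow> xs'] = [q. Qvar q \<leftarrow> ys @ x # zs]"
      "\<Phi> xs' \<noteq> 0" "no_adjacent_consts xs'"
      using "1.IH" x(2) by blast
    moreover have "[q. Qvar q \<leftarrow> ys @ x # zs] = [q. Qvar q \<leftarrow> xs]"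
      using x(1) xs by auto
    ultimately show ?thesis
      by metis
  qed
qed

definition entries_value ::
  "('a::comm_ring_1 \<Rightarrow> 'b::ring \<Rightarrow> 'b) \<Rightarrow> 'a galg \<Rightarrow> nat set \<Rightarrow> nat \<Rightarrow> (var \<Rightarrow> 'b) \<Rightarrow> 'b entry list \<Rightarrow> 'b"
where
  "entries_value sc r X i s xs = (\<Sum>\<sigma> | \<sigma> permutes X. sc (r \<sigma>) (wprod (map (entry_val s i \<sigma>) xs)))"

lemma entries_value_merge:
  "entries_value sc r X i s (ys @ Const j b # Const j' b' # zs) =
    entries_value sc r X i s (ys @ Const j'' (b * b') # zs)"
  by (simp add: entries_value_def wprod_append_mult_adjacent)

lemma entries_value_split:
  assumes "module sc"
  shows "entries_value sc r X i s (ys @ Const j (a + c) # zs) =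
    entries_value sc r X i s (ys @ Const ja a # zs) + entries_value sc r X i s (ys @ Const jc c # zs)"
  by (simp add: entries_value_def wprod_append_add module.scale_right_distrib[OF assms] sum.distrib)

fun admissible_entry :: "(nat \<Rightarrow> 'b set) \<Rightarrow> ('b \<Rightarrow> 'b) \<Rightarrow> 'b::ab_group_add entry \<Rightarrow> bool" where
  "admissible_entry G sh (Qvar q) = True"
| "admissible_entry G sh (Const j b) = (j \<in> {1..4} \<and> b \<in> type_part G sh j)"

definition entry_of :: "nat \<Rightarrow> nat set \<Rightarrow> (var \<Rightarrow> 'b) \<Rightarrow> var \<Rightarrow> 'b entry" where
  "entry_of i X s v = (if fst v = i \<and> snd v \<in> X then Qvar (snd v) else Const (fst v) (s v))"

lemma map_entry_val_entry_of:
  "\<sigma> permutes X \<Longrightarrow> map (entry_val s i \<sigma>) (map (entry_of i X s) w) = map (s \<circ> rename_type i \<sigma>) w"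
  by (induction w) (auto simp: entry_of_def rename_type_def permutes_not_in)

lemma Qvars_map_entry_of:
  "[q. Qvar q \<leftarrow> map (entry_of i X s) w] = map snd (filter (\<lambda>v. fst v = i \<and> snd v \<in> X) w)"
  by (induction w) (auto simp: entry_of_def)

lemma admissible_entry_entry_of:
  "admissible_subst G sh s \<Longrightarrow> fst v \<in> {1..4} \<Longrightarrow> admissible_entry G sh (entry_of i X s v)"
  by (cases v) (auto simp: entry_of_def admissible_subst_iff_type_part)

section \<open>Naming the constants by fresh variables\<close>

fun names_entry :: "nat \<Rightarrow> nat set \<Rightarrow> var \<Rightarrow> 'b entry \<Rightarrow> bool" where
  "names_entry i X v (Qvar q) \<longleftrightarrow> v = (i, q)"
| "names_entry i X v (Const j b) \<longleftrightarrow> fst v = j \<and> (j = i \<longrightarrow> snd v \<notin> X)"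

definition subst_of_entries :: "var list \<Rightarrow> 'b entry list \<Rightarrow> (var \<Rightarrow> 'b) \<Rightarrow> var \<Rightarrow> 'b" where
  "subst_of_entries w xs s v = (case map_of (zip w xs) v of Some (Const j b) \<Rightarrow> b | _ \<Rightarrow> s v)"

lemma names_entry_map_of_zip:
  assumes "list_all2 (names_entry i X) w xs" "map_of (zip w xs) v = Some x"
  shows "names_entry i X v x" "x \<in> set xs"
proof -
  have "(v, x) \<in> set (zip w xs)"
    using assms(2) by (rule map_of_SomeD)
  then show "names_entry i X v x" "x \<in> set xs"
    using assms(1) by (auto simp: list_all2_iff dest: set_zip_rightD)
qed

lemma admissible_subst_of_entries:
  assumes "list_all2 (names_entry i X) w xs" "\<forall>x\<in>set xs. admissible_entry G sh x"
    and "admissible_subst G sh s"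
  shows "admissible_subst G sh (subst_of_entries w xs s)"
  unfolding admissible_subst_iff_type_part
proof (intro ballI allI)
  fix j k assume "j \<in> {1..4::nat}"
  then show "subst_of_entries w xs s (j, k) \<in> type_part G sh j"
    using assms names_entry_map_of_zip[OF assms(1), of "(j, k)"]
    by (fastforce simp: subst_of_entries_def admissible_subst_iff_type_part split: option.split entry.split)
qed

lemma map_subst_of_entries_rename_type:
  assumes names: "list_all2 (names_entry i X) w xs" and "distinct w" and \<sigma>: "\<sigma> permutes X"
  shows "map (subst_of_entries w xs s \<circ> rename_type i \<sigma>) w = map (entry_val s i \<sigma>) xs"
proof (rule nth_equalityI)
  have len: "length w = length xs"
    using names by (rule list_all2_lengthD)
  then show "length (map (subst_of_entries w xs s \<circ> rename_type i \<sigma>) w) = length (map (entry_val s i \<sigma>) xs)"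
    by simp
  fix p assume "p < length (map (subst_of_entries w xs s \<circ> rename_type i \<sigma>) w)"
  then have p: "p < length w" "p < length xs"
    using len by simp_all
  have at_p: "map_of (zip w xs) (w ! p) = Some (xs ! p)"
    using map_of_zip_nth[OF len assms(2) p(2)] .
  have named: "names_entry i X (w ! p) (xs ! p)"
    using names p(1) by (simp add: list_all2_conv_all_nth)
  have "subst_of_entries w xs s (rename_type i \<sigma> (w ! p)) = entry_val s i \<sigma> (xs ! p)"
  proof (cases "xs ! p")
    case (Qvar q)
    show ?thesis
    proof (cases "q \<in> X")
      case True
      then have "\<forall>j b. map_of (zip w xs) (i, \<sigma> q) \<noteq> Some (Const j b)"
        using names_entry_map_of_zip(1)[OF names, of "(i, \<sigma> q)"] permutes_in_image[OF \<sigma>] by fastforce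
      then show ?thesis
        using Qvar named by (auto simp: subst_of_entries_def rename_type_def split: option.split entry.split)
    next
      case False
      then show ?thesis
        using Qvar named at_p \<sigma> by (auto simp: subst_of_entries_def rename_type_def permutes_not_in)
    qed
  next
    case (Const j b)
    then have "rename_type i \<sigma> (w ! p) = w ! p"
      using named \<sigma> by (auto simp: rename_type_def permutes_not_in)
    then show ?thesis
      using Const at_p by (simp add: subst_of_entries_def)
  qed
  then show "map (subst_of_entries w xs s \<circ> rename_type i \<sigma>) w ! p = map (entry_val s i \<sigma>) xs ! p"
    using p by simp
qed

fun const_count :: "nat \<Rightarrow> 'b entry list \<Rightarrow> nat" where
  "const_count j [] = 0"
| "const_count j (Qvar q # xs) = const_count j xs"
| "const_count j (Const j' b # xs) = (if j' = j then Suc (const_count j xs) else const_count j xs)"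

lemma const_count_Const: "const_count j (Const j' b # xs) = const_count j xs + (if j' = j then 1 else 0)"
  by simp

lemma length_eq_Qvars_plus_const_counts:
  "\<forall>j b. Const j b \<in> set xs \<longrightarrow> j \<in> {1..4} \<Longrightarrow>
    length xs = length [q. Qvar q \<leftarrow> xs] + (\<Sum>j\<in>{1..4}. const_count j xs)"
proof (induction xs)
  case (Cons x xs)
  then show ?case
    by (cases x) (auto simp del: const_count.simps(3) simp: const_count_Const sum.distrib)
qed simp

fun name_entries :: "nat \<Rightarrow> (nat \<Rightarrow> nat list) \<Rightarrow> 'b entry list \<Rightarrow> var list" where
  "name_entries i L [] = []"
| "name_entries i L (Qvar q # xs) = (i, q) # name_entries i L xs"
| "name_entries i L (Const j b # xs) = (j, hd (L j)) # name_entries i (L(j := tl (L j))) xs"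

lemma length_tl_update:
  assumes "\<forall>j'. length (L j') = const_count j' (Const j b # xs)"
  shows "\<forall>j'. length ((L(j := tl (L j))) j') = const_count j' xs"
  using assms by auto

lemma names_entry_name_entries:
  assumes "\<forall>j. length (L j) = const_count j xs" "set (L i) \<inter> X = {}"
  shows "list_all2 (names_entry i X) (name_entries i L xs) xs"
  using assms
proof (induction i L xs rule: name_entries.induct)
  case (3 i L j b xs)
  obtain k ks where L: "L j = k # ks"
    using "3.prems"(1) by (metis const_count.simps(3) length_Suc_conv)
  have "set ((L(j := tl (L j))) i) \<inter> X = {}"
    using "3.prems"(2) L by auto
  with length_tl_update[OF "3.prems"(1)]
  have "list_all2 (names_entry i X) (name_entries i (L(j := tl (L j))) xs) xs"
    by (rule "3.IH")
  then show ?case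
    using "3.prems"(2) L by auto
qed auto

lemma set_name_entries:
  assumes "\<forall>j. length (L j) = const_count j xs"
  shows "set (name_entries i L xs) = Pair i ` set [q. Qvar q \<leftarrow> xs] \<union> {(j, k). k \<in> set (L j)}"
  using assms
proof (induction i L xs rule: name_entries.induct)
  case (3 i L j b xs)
  obtain k ks where L: "L j = k # ks"
    using "3.prems"(1) by (metis const_count.simps(3) length_Suc_conv)
  have "set (name_entries i (L(j := tl (L j))) xs) =
      Pair i ` set [q. Qvar q \<leftarrow> xs] \<union> {(j', k'). k' \<in> set ((L(j := tl (L j))) j')}"
    using length_tl_update[OF "3.prems"(1)] by (rule "3.IH")
  moreover have "insert (j, k) {(j', k'). k' \<in> set ((L(j := ks)) j')} = {(j', k'). k' \<in> set (L j')}"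
    using L by (auto split: if_splits)
  ultimately show ?case
    using L by auto
qed auto

lemma distinct_name_entries:
  assumes "\<forall>j. length (L j) = const_count j xs" "\<forall>j. distinct (L j)"
    and "distinct [q. Qvar q \<leftarrow> xs]" "set (L i) \<inter> set [q. Qvar q \<leftarrow> xs] = {}"
  shows "distinct (name_entries i L xs)"
  using assms
proof (induction i L xs rule: name_entries.induct)
  case (2 i L q xs)
  then show ?case
    by (auto simp: set_name_entries)
next
  case (3 i L j b xs)
  obtain k ks where L: "L j = k # ks"
    using "3.prems"(1) by (metis const_count.simps(3) length_Suc_conv)
  note length' = length_tl_update[OF "3.prems"(1)]
  have "distinct ks" "k \<notin> set ks"
    using "3.prems"(2) L by (metis distinct.simps(2))+
  then have "\<forall>j'. distinct ((L(j := tl (L j))) j')"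
    "set ((L(j := tl (L j))) i) \<inter> set [q. Qvar q \<leftarrow> xs] = {}"
    using "3.prems"(2,4) L by auto
  with length' "3.prems"(3) have "distinct (name_entries i (L(j := tl (L j))) xs)"
    by (intro "3.IH") auto
  moreover have "(j, k) \<notin> set (name_entries i (L(j := tl (L j))) xs)"
    unfolding set_name_entries[OF length'] using "3.prems"(4) L \<open>k \<notin> set ks\<close> by auto
  ultimately show ?case
    using L by simp
qed auto

lemma const_count_eq_0: "\<forall>j' b. Const j' b \<in> set xs \<longrightarrow> j' \<in> J \<Longrightarrow> j \<notin> J \<Longrightarrow> const_count j xs = 0"
  by (induction j xs rule: const_count.induct) auto

lemma exists_fresh_indices:
  assumes "finite X"
  obtains S where "S \<subseteq> {1..card X + c} - X" "card S = c" "finite S"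
proof -
  have "card {1..card X + c} - card X \<le> card ({1..card X + c} - X)"
    using assms by (rule diff_card_le_card_Diff)
  then have "c \<le> card ({1..card X + c} - X)"
    by simp
  then obtain S where "S \<subseteq> {1..card X + c} - X" "card S = c" "finite S"
    by (rule obtain_subset_with_card_n)
  then show ?thesis
    by (rule that)
qed

lemma exists_naming_of_entries:
  assumes types: "\<forall>j b. Const j b \<in> set xs \<longrightarrow> j \<in> {1..4}" and i: "i \<in> {1..4}"
    and distinct: "distinct [q. Qvar q \<leftarrow> xs]" and X: "set [q. Qvar q \<leftarrow> xs] = X"
  shows "\<exists>t S w. card X \<le> t i \<and> (\<Sum>j\<in>{1..4}. t j) = length xs \<and>
    S \<subseteq> {1..t i} - X \<and> card S = t i - card X \<and>
    multilinear_in ({(j, k). j \<in> {1..4} \<and> j \<noteq> i \<and> k \<in> {1..t j}} \<union> {(i, k) | k. k \<in> X \<union> S}) w \<and>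
    list_all2 (names_entry i X) w xs"
proof -
  let ?M = "card X" and ?c = "\<lambda>j. const_count j xs"
  have M: "length [q. Qvar q \<leftarrow> xs] = ?M"
    using distinct X distinct_card by metis
  define t where "t j = (if j = i then ?M + ?c i else ?c j)" for j
  have "finite X"
    using X by (metis List.finite_set)
  then obtain S where "S \<subseteq> {1..card X + ?c i} - X" "card S = ?c i" "finite S"
    by (rule exists_fresh_indices)
  then have S: "S \<subseteq> {1..t i} - X" "card S = ?c i" "finite S"
    by (simp_all add: t_def)
  define L where "L j = (if j = i then sorted_list_of_set S else [1..<?c j + 1])" for j
  have len: "\<forall>j. length (L j) = ?c j"
    using S(2) by (simp add: L_def)
  have L_i: "set (L i) \<inter> X = {}"
    using S(1) \<open>finite S\<close> by (auto simp: L_def)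
  define w where "w = name_entries i L xs"
  have "distinct w"
    unfolding w_def using len distinct L_i X by (intro distinct_name_entries) (auto simp: L_def)
  have "set w = Pair i ` X \<union> {(j, k). k \<in> set (L j)}"
    unfolding w_def set_name_entries[OF len] X ..
  also have "\<dots> = {(j, k). j \<in> {1..4} \<and> j \<noteq> i \<and> k \<in> {1..t j}} \<union> {(i, k) | k. k \<in> X \<union> S}"
    using const_count_eq_0[OF types] S(3) i by (auto simp: L_def t_def split: if_splits)
  finally have set_w: "set w = \<dots>" .
  have "(\<Sum>j\<in>{1..4}. t j) = (\<Sum>j\<in>{1..4}. ?c j + (if j = i then ?M else 0))"
    by (rule sum.cong) (auto simp: t_def)
  also have "\<dots> = length xs"
    using i length_eq_Qvars_plus_const_counts[OF types] M by (simp add: sum.distrib)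
  finally have "(\<Sum>j\<in>{1..4}. t j) = length xs" .
  moreover have "list_all2 (names_entry i X) w xs"
    unfolding w_def using len L_i by (rule names_entry_name_entries)
  ultimately show ?thesis
    using S \<open>distinct w\<close> set_w unfolding multilinear_in_def
    by (intro exI[of _ t] exI[of _ S] exI[of _ w]) (simp add: t_def)
qed

section \<open>Short non-vanishing monomials\<close>

lemma entries_value_map_entry_of:
  fixes sc :: "'a::comm_ring_1 \<Rightarrow> 'b::ring \<Rightarrow> 'b"
  assumes "module sc" "finite X" "in_group_algebra r X"
  shows "entries_value sc r X i s (map (entry_of i X s) w) = eval_poly sc (act_type i r (monom_poly w)) s"
  unfolding entries_value_def eval_act_type_monom_poly[OF assms]
  by (intro sum.cong) (simp_all add: map_entry_val_entry_of del: map_map)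

lemma length_Qvars_le: "length [q. Qvar q \<leftarrow> xs] \<le> length xs"
  by (induction xs) (auto split: entry.split)

lemma exists_monomial_realizing_entries:
  fixes sc :: "'a::field \<Rightarrow> 'b::ring \<Rightarrow> 'b"
  assumes m: "module sc" and X: "finite X" "in_group_algebra r X" and i: "i \<in> {1..4}"
    and s: "admissible_subst G sh s" and entries: "\<forall>x\<in>set xs. admissible_entry G sh x"
    and Qvars: "distinct [q. Qvar q \<leftarrow> xs]" "set [q. Qvar q \<leftarrow> xs] = X"
    and nz: "entries_value sc r X i s xs \<noteq> 0"
  shows "\<exists>t S w. card X \<le> t i \<and> (\<Sum>j\<in>{1..4}. t j) = length xs \<and>
    S \<subseteq> {1..t i} - X \<and> card S = t i - card X \<and>
    multilinear_in ({(j, k). j \<in> {1..4} \<and> j \<noteq> i \<and> k \<in> {1..t j}} \<union> {(i, k) | k. k \<in> X \<union> S}) w \<and>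
    \<not> vanishes_in sc G sh (act_type i r (monom_poly w))"
proof -
  have "\<forall>j b. Const j b \<in> set xs \<longrightarrow> j \<in> {1..4}"
    using entries by fastforce
  then obtain t S w where tSw: "card X \<le> t i" "(\<Sum>j\<in>{1..4}. t j) = length xs"
    "S \<subseteq> {1..t i} - X" "card S = t i - card X"
    and w: "multilinear_in ({(j, k). j \<in> {1..4} \<and> j \<noteq> i \<and> k \<in> {1..t j}} \<union> {(i, k) | k. k \<in> X \<union> S}) w"
    "list_all2 (names_entry i X) w xs"
    using exists_naming_of_entries[OF _ i Qvars] by blast
  let ?s' = "subst_of_entries w xs s"
  have "distinct w"
    using w(1) by (simp add: multilinear_in_def)
  then have "eval_poly sc (act_type i r (monom_poly w)) ?s' = entries_value sc r X i s xs"
    by (simp add: eval_act_type_monom_poly[OF m X] entries_value_def map_subst_of_entries_rename_type[OF w(2)])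
  then have "\<not> vanishes_in sc G sh (act_type i r (monom_poly w))"
    using admissible_subst_of_entries[OF w(2) entries s] nz by (auto simp: vanishes_in_def)
  with tSw w(1) show ?thesis
    by blast
qed

lemma exists_short_monomial:
  fixes sc :: "'a::field_char_0 \<Rightarrow> 'b::ring \<Rightarrow> 'b"
  assumes A: "superalgebra sc G" "graded_linear_involutive sc G sh"
    and i: "i \<in> {1..4}" and X: "finite X" "in_group_algebra r X"
    and w: "distinct w" "Pair i ` X \<subseteq> set w" "fst ` set w \<subseteq> {1..4}"
    and nz: "\<not> vanishes_in sc G sh (act_type i r (monom_poly w))"
  shows "\<exists>t S w'. card X \<le> t i \<and> card X \<le> (\<Sum>j\<in>{1..4}. t j) \<and> (\<Sum>j\<in>{1..4}. t j) \<le> 2 * card X + 1 \<and>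
    S \<subseteq> {1..t i} - X \<and> card S = t i - card X \<and>
    multilinear_in ({(j, k). j \<in> {1..4} \<and> j \<noteq> i \<and> k \<in> {1..t j}} \<union> {(i, k) | k. k \<in> X \<union> S}) w' \<and>
    \<not> vanishes_in sc G sh (act_type i r (monom_poly w'))"
proof -
  note m = superalgebra_module[OF A(1)]
  obtain s where s: "admissible_subst G sh s" "eval_poly sc (act_type i r (monom_poly w)) s \<noteq> 0"
    using nz by (auto simp: vanishes_in_def)
  define xs where "xs = map (entry_of i X s) w"
  have "entries_value sc r X i s xs \<noteq> 0"
    using s(2) by (simp add: xs_def entries_value_map_entry_of[OF m X])
  moreover have "\<forall>x\<in>set xs. admissible_entry G sh x"
    using w(3) admissible_entry_entry_of[OF s(1)] by (auto simp: xs_def)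
  moreover have "\<exists>ja a jc c. admissible_entry G sh (Const ja a) \<and> admissible_entry G sh (Const jc c) \<and>
      b * b' = a + c"
    if "admissible_entry G sh (Const j b)" "admissible_entry G sh (Const j' b')" for j b j' b'
    using that type_part_mult_decomposition[OF A, of j j' b b'] by simp
  ultimately obtain xs' where xs': "\<forall>x\<in>set xs'. admissible_entry G sh x"
    "[q. Qvar q \<leftarrow> xs'] = [q. Qvar q \<leftarrow> xs]" "entries_value sc r X i s xs' \<noteq> 0" "no_adjacent_consts xs'"
    using exists_no_adjacent_consts[where \<Phi> = "entries_value sc r X i s", OF entries_value_merge entries_value_split[OF m]]
    by blast
  have Qvars: "[q. Qvar q \<leftarrow> xs'] = map snd (filter (\<lambda>v. fst v = i \<and> snd v \<in> X) w)"
    unfolding xs'(2) xs_def by (rule Qvars_map_entry_of)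
  have distinct: "distinct [q. Qvar q \<leftarrow> xs']"
    unfolding Qvars using w(1) by (auto simp: distinct_map inj_on_def)
  moreover have set: "set [q. Qvar q \<leftarrow> xs'] = X"
    unfolding Qvars using w(2) by force
  ultimately have "card X = length [q. Qvar q \<leftarrow> xs']"
    by (metis distinct_card)
  then have bounds: "card X \<le> length xs'" "length xs' \<le> 2 * card X + 1"
    using length_Qvars_le length_le_if_no_adjacent_consts[OF xs'(4)] by simp_all
  obtain t S w' where "card X \<le> t i" "(\<Sum>j\<in>{1..4}. t j) = length xs'"
    "S \<subseteq> {1..t i} - X" "card S = t i - card X"
    "multilinear_in ({(j, k). j \<in> {1..4} \<and> j \<noteq> i \<and> k \<in> {1..t j}} \<union> {(i, k) | k. k \<in> X \<union> S}) w'"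
    "\<not> vanishes_in sc G sh (act_type i r (monom_poly w'))"
    using exists_monomial_realizing_entries[OF m X i s(1) xs'(1) distinct set xs'(3)] by blast
  with bounds show ?thesis
    by (intro exI[of _ t] exI[of _ S] exI[of _ w']) simp
qed

lemma finite_support_in_P:
  assumes "in_P n f"
  shows "finite {w. f w \<noteq> 0}"
proof -
  have "vars_n n = (\<Union>j\<in>{1..4}. {j} \<times> {1..n j})"
    by (auto simp: vars_n_def)
  then have "finite (vars_n n)"
    by simp
  moreover have "{w. f w \<noteq> 0} \<subseteq> {w. set w \<subseteq> vars_n n \<and> length w \<le> card (vars_n n)}"
    using assms by (auto simp: in_P_def multilinear_in_def distinct_card[symmetric])
  ultimately show ?thesis
    using finite_lists_length_le finite_subset by blast
qed

theorem proposition4p1: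
  fixes sc :: "'a::field_char_0 \<Rightarrow> 'b::ring \<Rightarrow> 'b"
    and G :: "nat \<Rightarrow> 'b set" and sh :: "'b \<Rightarrow> 'b"
    and n :: "nat \<Rightarrow> nat" and m i0 :: nat and Q :: "nat set"
    and \<rho> :: "nat \<Rightarrow> 'a galg" and f :: "'a fpoly"
  assumes A: "sharp_superalgebra sc G sh"
    and n_pos: "\<forall>i\<in>{1..4}. n i > 0" and m_pos: "m > 0"
    and i0: "i0 \<in> {1..4}" and n_i0: "n i0 \<ge> m^2"
    and Q: "Q \<subseteq> {1..n i0}" "card Q = m^2"
    and rho_i0: "\<forall>\<sigma>. \<rho> i0 \<sigma> \<noteq> 0 \<longrightarrow> \<sigma> permutes Q"
    and rho_j: "\<forall>j\<in>{1..4}. j \<noteq> i0 \<longrightarrow> (\<forall>\<sigma>. \<rho> j \<sigma> \<noteq> 0 \<longrightarrow> \<sigma> permutes {1..n j})"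
    and f: "in_P n f"
    and nz: "\<not> vanishes_in sc G sh (tensor_act \<rho> f)"
  shows "\<exists>t :: nat \<Rightarrow> nat. \<exists>S :: nat set. \<exists>w :: var list.
     t i0 \<ge> m^2 \<and> m^2 \<le> (\<Sum>i\<in>{1..4}. t i) \<and> (\<Sum>i\<in>{1..4}. t i) \<le> 2 * m^2 + 1 \<and>
     S \<subseteq> {1..t i0} - Q \<and> card S = t i0 - m^2 \<and>
     multilinear_in ({(j, k). j \<in> {1..4} \<and> j \<noteq> i0 \<and> k \<in> {1..t j}} \<union> {(i0, k) | k. k \<in> Q \<union> S}) w \<and>
     \<not> vanishes_in sc G sh
         (tensor_act (\<lambda>j. if j = i0 then \<rho> i0 else galg_unit) (monom_poly w))"
proof -
  have super: "superalgebra sc G" "graded_linear_involutive sc G sh"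
    using A by (auto simp: sharp_superalgebra_def superinvolution_def graded_involution_def)
  note m = superalgebra_module[OF super(1)] and f_fin = finite_support_in_P[OF f]
  have "finite Q"
    using Q(1) finite_subset by blast
  have \<rho>_Q: "in_group_algebra (\<rho> i0) Q"
    using rho_i0 by (simp add: in_group_algebra_def)
  have "\<forall>j\<in>{1..4}. finite (if j = i0 then Q else {1..n j}) \<and>
      in_group_algebra (\<rho> j) (if j = i0 then Q else {1..n j})"
    using rho_j \<rho>_Q \<open>finite Q\<close> by (simp add: in_group_algebra_def)
  then have "\<not> vanishes_in sc G sh (act_type i0 (\<rho> i0) f)"
    by (rule not_vanishes_act_type_if_not_vanishes_tensor_act[OF m _ i0 f_fin nz])
  then obtain w where "f w \<noteq> 0" "\<not> vanishes_in sc G sh (act_type i0 (\<rho> i0) (monom_poly w))"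
    using exists_monomial_not_vanishes_act_type[OF m \<open>finite Q\<close> \<rho>_Q f_fin] by blast
  moreover have "distinct w" "set w = vars_n n"
    using f \<open>f w \<noteq> 0\<close> by (auto simp: in_P_def multilinear_in_def)
  moreover have "Pair i0 ` Q \<subseteq> vars_n n" "fst ` vars_n n \<subseteq> {1..4}"
    using Q(1) i0 by (auto simp: vars_n_def)
  ultimately obtain t S w' where "m^2 \<le> t i0" "m^2 \<le> (\<Sum>j\<in>{1..4}. t j)" "(\<Sum>j\<in>{1..4}. t j) \<le> 2 * m^2 + 1"
    "S \<subseteq> {1..t i0} - Q" "card S = t i0 - m^2"
    "multilinear_in ({(j, k). j \<in> {1..4} \<and> j \<noteq> i0 \<and> k \<in> {1..t j}} \<union> {(i0, k) | k. k \<in> Q \<union> S}) w'"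
    "\<not> vanishes_in sc G sh (act_type i0 (\<rho> i0) (monom_poly w'))"
    using exists_short_monomial[OF super i0 \<open>finite Q\<close> \<rho>_Q, of w] Q(2) by auto
  then show ?thesis
    unfolding tensor_act_single[OF \<open>finite Q\<close> \<rho>_Q i0] by blast
qed

end
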